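(* For any locally-fixable problem on a dynamic graph $G=(V,E)$, if every node is valid just before the insertion or deletion of an edge $(u,v)$, then after the update a solution in which every node is valid can be obtained by changing the states of at most two nodes, and only the states of the endpoints $u$ and $v$ are changed.
   Context: A graph problem is specified by a set of states $S_v$ for each node $v$; each node picks a state $s(v)\in S_v$. It is locally-fixable if for each node $v$ there is a validity function $f_v$ deciding whether $v$ is valid, such that (i) the output of $f_v$ depends only on the states of $v$ and its neighbors, and (ii) for any assignment of states in which $v$ is invalid, one can change only the state of $v$ (keeping all neighbors' states fixed) so that $v$ becomes valid and no previously valid neighbor of $v$ becomes invalid. A solution is feasible iff all nodes are valid. *)

theory Defs
  imports Main
begin

definition graph :: "'v set \<Rightarrow> ('v \<Rightarrow> 'v \<Rightarrow> bool) \<Rightarrow> bool" where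
  "graph V E \<longleftrightarrow> (\<forall>x y. E x y \<longrightarrow> x \<in> V \<and> y \<in> V \<and> x \<noteq> y \<and> E y x)"

definition assignment :: "'v set \<Rightarrow> ('v \<Rightarrow> 's set) \<Rightarrow> ('v \<Rightarrow> 's) \<Rightarrow> bool" where
  "assignment V S s \<longleftrightarrow> (\<forall>w\<in>V. s w \<in> S w)"

text \<open>A graph problem on a dynamic graph with node set V: state sets S, and a validity
  predicate valid E v s (validity function f_v of node v in graph E under assignment s).
  Locality (i): validity of v depends only on the states of v and of its neighbours
  (and thus coincides in two graphs where v has the same neighbourhood).\<close>
definition locally_fixable ::
  "'v set \<Rightarrow> ('v \<Rightarrow> 's set) \<Rightarrow> (('v \<Rightarrow> 'v \<Rightarrow> bool) \<Rightarrow> 'v \<Rightarrow> ('v \<Rightarrow> 's) \<Rightarrow> bool) \<Rightarrow> bool" where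
  "locally_fixable V S valid \<longleftrightarrow>
     (\<forall>E E' v s s'. graph V E \<and> graph V E' \<and> v \<in> V \<and>
        assignment V S s \<and> assignment V S s' \<and>
        (\<forall>w. E v w \<longleftrightarrow> E' v w) \<and> s v = s' v \<and> (\<forall>w. E v w \<longrightarrow> s w = s' w)
        \<longrightarrow> valid E v s = valid E' v s') \<and>
     (\<forall>E v s. graph V E \<and> v \<in> V \<and> assignment V S s \<and> \<not> valid E v s \<longrightarrow>
        (\<exists>x\<in>S v. valid E v (s(v := x)) \<and>
           (\<forall>w\<in>V. E v w \<and> valid E w s \<longrightarrow> valid E w (s(v := x)))))"

definition edge_insert :: "('v \<Rightarrow> 'v \<Rightarrow> bool) \<Rightarrow> 'v \<Rightarrow> 'v \<Rightarrow> ('v \<Rightarrow> 'v \<Rightarrow> bool)" where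
  "edge_insert E u v = (\<lambda>x y. E x y \<or> (x = u \<and> y = v) \<or> (x = v \<and> y = u))"

definition edge_delete :: "('v \<Rightarrow> 'v \<Rightarrow> bool) \<Rightarrow> 'v \<Rightarrow> 'v \<Rightarrow> ('v \<Rightarrow> 'v \<Rightarrow> bool)" where
  "edge_delete E u v = (\<lambda>x y. E x y \<and> \<not> ((x = u \<and> y = v) \<or> (x = v \<and> y = u)))"

end

theory Submission
  imports Defs
begin

text \<open>An edge update changes only the neighbourhoods of its endpoints, so by locality every
  other node stays valid and only u and v may need repair. Fixing an invalid node z keeps all
  valid neighbours of z valid by fixability, and all other nodes valid by locality, since their
  closed neighbourhoods do not contain z. Repairing u and then v therefore yields a solution
  that differs from the old one at most at u and v.\<close>

lemma locally_fixable_valid_cong: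
  assumes "locally_fixable V S valid" "graph V E" "graph V E'" "v \<in> V"
    "assignment V S s" "assignment V S s'"
    "\<And>w. E v w \<longleftrightarrow> E' v w" "s v = s' v" "\<And>w. E v w \<Longrightarrow> s w = s' w"
  shows "valid E v s = valid E' v s'"
  using assms unfolding locally_fixable_def by blast

lemma locally_fixable_fix:
  assumes "locally_fixable V S valid" "graph V E" "v \<in> V" "assignment V S s"
    "\<not> valid E v s"
  obtains x where "x \<in> S v" "valid E v (s(v := x))"
    "\<And>w. w \<in> V \<Longrightarrow> E v w \<Longrightarrow> valid E w s \<Longrightarrow> valid E w (s(v := x))"
  using assms unfolding locally_fixable_def by blast

lemma graph_edge_insert:
  assumes "graph V E" "u \<in> V" "v \<in> V" "u \<noteq> v"
  shows "graph V (edge_insert E u v)"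
  using assms unfolding graph_def edge_insert_def by blast

lemma graph_edge_delete:
  assumes "graph V E"
  shows "graph V (edge_delete E u v)"
  using assms unfolding graph_def edge_delete_def by blast

lemma edge_insert_other: "w \<noteq> u \<Longrightarrow> w \<noteq> v \<Longrightarrow> edge_insert E u v w = E w"
  unfolding edge_insert_def by auto

lemma edge_delete_other: "w \<noteq> u \<Longrightarrow> w \<noteq> v \<Longrightarrow> edge_delete E u v w = E w"
  unfolding edge_delete_def by auto

lemma assignment_update: "assignment V S s \<Longrightarrow> x \<in> S z \<Longrightarrow> assignment V S (s(z := x))"
  unfolding assignment_def by auto

lemma locally_fixable_repair_node:
  assumes lf: "locally_fixable V S valid" and g: "graph V E" and a: "assignment V S s"
    and z: "z \<in> V" and val: "\<forall>w\<in>V - insert z B. valid E w s"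
  obtains s' where "assignment V S s'" "\<forall>w\<in>V - B. valid E w s'"
    "\<And>w. s' w \<noteq> s w \<Longrightarrow> w = z"
proof (cases "valid E z s")
  case True
  then show ?thesis using that a val by blast
next
  case False
  then obtain x where x: "x \<in> S z" "valid E z (s(z := x))"
    and nbrs: "\<And>w. w \<in> V \<Longrightarrow> E z w \<Longrightarrow> valid E w s \<Longrightarrow> valid E w (s(z := x))"
    using locally_fixable_fix[OF lf g z a] by blast
  have a': "assignment V S (s(z := x))" using assignment_update[OF a x(1)] .
  have "valid E w (s(z := x))" if w: "w \<in> V - B" for w
  proof (cases "w = z")
    case True then show ?thesis using x(2) by simp
  next
    case wz: False
    then have vw: "valid E w s" using val w by auto
    show ?thesis
    proof (cases "E z w")
      case True then show ?thesis using nbrs w vw by blast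
    next
      case False
      then have "\<not> E w z" using g unfolding graph_def by blast
      then have "valid E w s = valid E w (s(z := x))"
        using w wz by (intro locally_fixable_valid_cong[OF lf g g _ a a']) auto
      then show ?thesis using vw by simp
    qed
  qed
  moreover have "w = z" if "(s(z := x)) w \<noteq> s w" for w
    using that by (cases "w = z") auto
  ultimately show ?thesis using that[OF a'] by blast
qed

theorem lemma11:
  fixes V :: "'v set" and S :: "'v \<Rightarrow> 's set"
    and valid :: "('v \<Rightarrow> 'v \<Rightarrow> bool) \<Rightarrow> 'v \<Rightarrow> ('v \<Rightarrow> 's) \<Rightarrow> bool"
    and E E' :: "'v \<Rightarrow> 'v \<Rightarrow> bool" and s :: "'v \<Rightarrow> 's" and u v :: 'v
  assumes "locally_fixable V S valid"
    and "graph V E"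
    and "u \<in> V" and "v \<in> V" and "u \<noteq> v"
    and "E' = edge_insert E u v \<or> E' = edge_delete E u v"
    and "assignment V S s"
    and "\<forall>w\<in>V. valid E w s"
  shows "\<exists>s'. assignment V S s' \<and> (\<forall>w\<in>V. valid E' w s') \<and>
             (\<forall>w. s' w \<noteq> s w \<longrightarrow> w = u \<or> w = v) \<and>
             card {w. s' w \<noteq> s w} \<le> 2"
proof -
  note lf = assms(1) and a = assms(7)
  have g': "graph V E'"
    using assms(6) graph_edge_insert[OF assms(2-5)] graph_edge_delete[OF assms(2)] by blast
  have "valid E' w s" if "w \<in> V - {u, v}" for w
  proof -
    have "E' w = E w"
      using that assms(6) edge_insert_other edge_delete_other by fastforce
    then show ?thesis
      using locally_fixable_valid_cong[OF lf assms(2) g' _ a a] that assms(8) by auto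
  qed
  then obtain s1 where s1: "assignment V S s1" "\<forall>w\<in>V - {v}. valid E' w s1"
    and ch1: "\<And>w. s1 w \<noteq> s w \<Longrightarrow> w = u"
    using locally_fixable_repair_node[OF lf g' a assms(3), of "{v}"] by blast
  obtain s2 where s2: "assignment V S s2" "\<forall>w\<in>V. valid E' w s2"
    and ch2: "\<And>w. s2 w \<noteq> s1 w \<Longrightarrow> w = v"
    using locally_fixable_repair_node[OF lf g' s1(1) assms(4), of "{}"] s1(2) by auto
  have changed: "{w. s2 w \<noteq> s w} \<subseteq> {u, v}"
  proof
    fix w assume "w \<in> {w. s2 w \<noteq> s w}"
    then have "s2 w \<noteq> s1 w \<or> s1 w \<noteq> s w" by auto
    then show "w \<in> {u, v}" using ch1 ch2 by blast
  qed
  then have "card {w. s2 w \<noteq> s w} \<le> card {u, v}" by (intro card_mono) simp_all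
  also have "\<dots> \<le> 2" by (simp add: card_insert_if)
  finally show ?thesis using s2 changed by blast
qed

end
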